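(* Let $X$ be the killed diffusion on $(0,\infty)$ described in the context. If $$\liminf_{z\to\infty}z^{-2}\bigl(b(z)^2+b'(z)+2\kappa(z)\bigr)>-\infty\quad\text{or}\quad\kappa\equiv0,$$ then the differential operator $\mathcal{L}^*\phi=\tfrac12\phi''-(b\phi)'-\kappa\phi$ is in the limit-point case at $\infty$.
   Context: $X$ is a one-dimensional diffusion on $(0,\infty)$ with diffusion coefficient identically $1$, drift $b\in C^1((0,\infty))$ and continuous killing rate $\kappa\ge0$; the endpoint $0$ is regular and the endpoint $\infty$ is inaccessible (natural or entrance). "Limit-point case at $\infty$" refers to Weyl's classification of singular Sturm–Liouville operators. *)

theory Defs
  imports "HOL-Analysis.Analysis"
begin

definition drift_prim :: "(real \<Rightarrow> real) \<Rightarrow> real \<Rightarrow> real" where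
  "drift_prim b x = (if 1 \<le> x then integral {1..x} b else - integral {x..1} b)"

text \<open>Scale density s(x) = exp(-2 B(x)) and speed density m(x) = 2 exp(2 B(x))
  of the diffusion with generator (1/2) f'' + b f' - kappa f.\<close>
definition scale_dens :: "(real \<Rightarrow> real) \<Rightarrow> real \<Rightarrow> real" where
  "scale_dens b x = exp (- 2 * drift_prim b x)"

definition speed_dens :: "(real \<Rightarrow> real) \<Rightarrow> real \<Rightarrow> real" where
  "speed_dens b x = 2 * exp (2 * drift_prim b x)"

definition regular_at_0 :: "(real \<Rightarrow> real) \<Rightarrow> (real \<Rightarrow> real) \<Rightarrow> bool" where
  "regular_at_0 b \<kappa> \<longleftrightarrow>
     set_integrable lborel {0<..1} (scale_dens b) \<and>
     set_integrable lborel {0<..1} (speed_dens b) \<and>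
     set_integrable lborel {0<..1} (\<lambda>x. \<kappa> x * speed_dens b x)"

text \<open>Feller test (with killing measure kappa(y) m(y) dy): infinity is inaccessible
  (natural or entrance) iff int_1^infty s(x) int_1^x (1 + kappa) m dy dx = infinity.\<close>
definition inaccessible_at_infty :: "(real \<Rightarrow> real) \<Rightarrow> (real \<Rightarrow> real) \<Rightarrow> bool" where
  "inaccessible_at_infty b \<kappa> \<longleftrightarrow>
     (\<integral>\<^sup>+ x \<in> {1..}. ennreal (scale_dens b x *
          integral {1..x} (\<lambda>y. (1 + \<kappa> y) * speed_dens b y)) \<partial>lborel) = \<infinity>"

text \<open>phi (with first and second derivatives phi1, phi2) solves
  L* phi = lambda phi on (0,infty), where
  L* phi = (1/2) phi'' - (b phi)' - kappa phi = (1/2) phi'' - b phi' - b' phi - kappa phi.\<close>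
definition Lstar_solution ::
  "(real \<Rightarrow> real) \<Rightarrow> (real \<Rightarrow> real) \<Rightarrow> (real \<Rightarrow> real) \<Rightarrow> complex \<Rightarrow>
   (real \<Rightarrow> complex) \<Rightarrow> (real \<Rightarrow> complex) \<Rightarrow> (real \<Rightarrow> complex) \<Rightarrow> bool" where
  "Lstar_solution b db \<kappa> lam \<phi> \<phi>1 \<phi>2 \<longleftrightarrow>
     (\<forall>x>0. (\<phi> has_vector_derivative \<phi>1 x) (at x) \<and>
            (\<phi>1 has_vector_derivative \<phi>2 x) (at x) \<and>
            \<phi>2 x / 2 - (complex_of_real (b x) * \<phi>1 x + complex_of_real (db x) * \<phi> x)
              - complex_of_real (\<kappa> x) * \<phi> x = lam * \<phi> x)"

definition sq_int_near_infty :: "(real \<Rightarrow> real) \<Rightarrow> (real \<Rightarrow> complex) \<Rightarrow> bool" where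
  "sq_int_near_infty w \<phi> \<longleftrightarrow> (\<exists>c. (\<lambda>x. w x * (cmod (\<phi> x))\<^sup>2) integrable_on {c..})"

text \<open>In Sturm--Liouville form, L* phi = (1/w) ( ((w/2) phi')' - (b' + kappa) w phi ) with
  weight w = exp(-2B) = scale density; L* is formally symmetric in L^2(w dx).
  Weyl: limit-point at infinity iff (for every lambda in C) some solution of
  L* phi = lambda phi is not in L^2(w dx) near infinity, i.e. not limit-circle.\<close>
definition Lstar_limit_point_at_infty ::
  "(real \<Rightarrow> real) \<Rightarrow> (real \<Rightarrow> real) \<Rightarrow> (real \<Rightarrow> real) \<Rightarrow> bool" where
  "Lstar_limit_point_at_infty b db \<kappa> \<longleftrightarrow>
     (\<forall>lam::complex. \<exists>\<phi> \<phi>1 \<phi>2. Lstar_solution b db \<kappa> lam \<phi> \<phi>1 \<phi>2 \<and>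
        \<not> sq_int_near_infty (scale_dens b) \<phi>)"

end

theory Submission
  imports Defs
begin

text \<open>Writing \<open>\<phi> = exp B * y\<close> with \<open>B' = b\<close> turns \<open>L* \<phi> = \<lambda> \<phi>\<close> into the normal form \<open>y'' = Q y\<close>,
  \<open>Q = b\<^sup>2 + b' + 2 \<kappa> + 2 \<lambda>\<close>, and the weight satisfies \<open>s \<bar>\<phi>\<bar>\<^sup>2 = \<bar>y\<bar>\<^sup>2\<close>. So it suffices that no
  fundamental system \<open>y1, y2\<close> with Wronskian 1 lies entirely in \<open>L\<^sup>2\<close> near infinity.

  Under the liminf condition, \<open>Re Q \<ge> - A x\<^sup>2\<close> near infinity; an energy identity for
  \<open>Re (y' * cnj y) / (A x\<^sup>2)\<close> then bounds \<open>\<integral> \<bar>y'\<bar>\<^sup>2 / (A x\<^sup>2)\<close> for square integrable \<open>y\<close>, and the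
  Wronskian forces \<open>(\<bar>y1\<bar>\<^sup>2 + \<bar>y2\<bar>\<^sup>2 + (\<bar>y1'\<bar>\<^sup>2 + \<bar>y2'\<bar>\<^sup>2) / (A x\<^sup>2)) / 2 \<ge> 1 / (sqrt A * x)\<close>,
  which is not integrable.

  If \<open>\<kappa> = 0\<close>, then \<open>Q - 2 \<lambda> = b\<^sup>2 + b'\<close> has the explicit solution \<open>exp B * S\<close> with
  \<open>S' = exp (- 2 B)\<close>, which is not square integrable; by Weyl's alternative (variation of constants
  plus a Gronwall argument) neither is some solution for \<open>Q\<close>.\<close>

section \<open>Integrals from 1\<close>

definition prim :: "(real \<Rightarrow> 'a::banach) \<Rightarrow> real \<Rightarrow> 'a" where
  "prim f x = (if 1 \<le> x then integral {1..x} f else - integral {x..1} f)"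

lemma drift_prim_eq_prim: "drift_prim b = prim b"
  by (auto simp: drift_prim_def prim_def fun_eq_iff)

lemma prim_1 [simp]: "prim f 1 = 0"
  by (simp add: prim_def)

lemma prim_eq_integral_diff:
  fixes f :: "real \<Rightarrow> 'a::banach"
  assumes "continuous_on {a..c} f" "a \<le> y" "y \<le> c" "a \<le> 1" "1 \<le> c"
  shows "prim f y = integral {a..y} f - integral {a..1} f"
proof (cases "1 \<le> y")
  case True
  have "integral {a..1} f + integral {1..y} f = integral {a..y} f"
    by (rule Henstock_Kurzweil_Integration.integral_combine)
       (use True assms in \<open>auto intro!: integrable_continuous_real intro: continuous_on_subset\<close>)
  then show ?thesis using True by (auto simp: prim_def algebra_simps)
next
  case False
  have "integral {a..y} f + integral {y..1} f = integral {a..1} f"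
    by (rule Henstock_Kurzweil_Integration.integral_combine)
       (use False assms in \<open>auto intro!: integrable_continuous_real intro: continuous_on_subset\<close>)
  then show ?thesis using False by (auto simp: prim_def algebra_simps)
qed

lemma has_vector_derivative_prim:
  fixes f :: "real \<Rightarrow> 'a::banach"
  assumes f: "continuous_on {0<..} f" and x: "x > 0"
  shows "(prim f has_vector_derivative f x) (at x)"
proof -
  define a where "a = min (x/2) (1/2)"
  define c where "c = max (2*x) 2"
  have ac: "0 < a" "a < x" "a \<le> 1" "x < c" "1 \<le> c" using x by (auto simp: a_def c_def)
  have fc: "continuous_on {a..c} f" using ac by (auto intro: continuous_on_subset[OF f])
  have "((\<lambda>u. integral {a..u} f) has_vector_derivative f x) (at x within {a..c})"
    by (rule integral_has_vector_derivative[OF fc]) (use ac in auto)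
  then have "((\<lambda>u. integral {a..u} f - integral {a..1} f) has_vector_derivative f x) (at x)"
    using at_within_Icc_at[of a x c] ac by (auto intro: derivative_eq_intros)
  then show ?thesis
    by (rule has_vector_derivative_transform_within_open[where S="{a<..<c}"])
       (use ac in \<open>auto simp: prim_eq_integral_diff[OF fc]\<close>)
qed

lemma continuous_on_prim:
  fixes f :: "real \<Rightarrow> 'a::banach"
  assumes "continuous_on {0<..} f"
  shows "continuous_on {0<..} (prim f)"
  by (rule continuous_at_imp_continuous_on)
     (use has_vector_derivative_prim[OF assms] in \<open>auto intro: has_vector_derivative_continuous\<close>)

lemma norm_prim_le:
  fixes f :: "real \<Rightarrow> 'a::banach"
  assumes f: "continuous_on {0<..} f" and x: "x > 0"
    and bound: "\<And>t. t \<in> {min x 1..max x 1} \<Longrightarrow> norm (f t) \<le> C * \<bar>t - 1\<bar> ^ n"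
  shows "norm (prim f x) \<le> C * \<bar>x - 1\<bar> ^ Suc n / Suc n"
proof (cases "1 \<le> x")
  case True
  have "((\<lambda>t. C * (t - 1) ^ n) has_integral
      (C * (x - 1) ^ Suc n / Suc n - C * (1 - 1) ^ Suc n / Suc n)) {1..x}"
    by (rule fundamental_theorem_of_calculus[OF True])
       (auto simp del: of_nat_Suc power_Suc intro!: derivative_eq_intros
        simp: has_real_derivative_iff_has_vector_derivative[symmetric])
  then have g: "((\<lambda>t. C * (t - 1) ^ n) has_integral (C * (x - 1) ^ Suc n / Suc n)) {1..x}"
    by simp
  have "f integrable_on {1..x}"
    by (rule integrable_continuous_real) (use True in \<open>auto intro: continuous_on_subset[OF f]\<close>)
  then have "norm (integral {1..x} f) \<le> integral {1..x} (\<lambda>t. C * (t - 1) ^ n)"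
    by (rule integral_norm_bound_integral) (use g bound True in \<open>auto\<close>)
  then show ?thesis using True integral_unique[OF g] by (simp add: prim_def)
next
  case False
  have "((\<lambda>t. C * (1 - t) ^ n) has_integral
      (- C * (1 - 1) ^ Suc n / Suc n - - C * (1 - x) ^ Suc n / Suc n)) {x..1}"
    by (rule fundamental_theorem_of_calculus)
       (use False in \<open>auto simp del: of_nat_Suc power_Suc intro!: derivative_eq_intros
        simp: has_real_derivative_iff_has_vector_derivative[symmetric]\<close>)
  then have g: "((\<lambda>t. C * (1 - t) ^ n) has_integral (C * (1 - x) ^ Suc n / Suc n)) {x..1}"
    by simp
  have "f integrable_on {x..1}"
    by (rule integrable_continuous_real) (use x in \<open>auto intro: continuous_on_subset[OF f]\<close>)
  then have "norm (integral {x..1} f) \<le> integral {x..1} (\<lambda>t. C * (1 - t) ^ n)"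
    by (rule integral_norm_bound_integral)
       (use g bound False in \<open>auto simp: abs_minus_commute\<close>)
  then show ?thesis using False integral_unique[OF g] by (simp add: prim_def abs_minus_commute)
qed

section \<open>Solutions of \<open>y'' = Q y\<close>\<close>

lemma has_vector_derivative_suminf:
  fixes f d :: "nat \<Rightarrow> real \<Rightarrow> 'a::banach"
  assumes der: "\<And>n y. y \<in> {a<..<c} \<Longrightarrow> (f n has_vector_derivative d n y) (at y)"
    and bound_f: "\<And>n y. y \<in> {a<..<c} \<Longrightarrow> norm (f n y) \<le> M n"
    and bound_d: "\<And>n y. y \<in> {a<..<c} \<Longrightarrow> norm (d n y) \<le> M' n"
    and "summable M" "summable M'" and x: "x \<in> {a<..<c}"
  shows "((\<lambda>y. \<Sum>n. f n y) has_vector_derivative (\<Sum>n. d n x)) (at x)"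
proof -
  let ?S = "{a<..<c}"
  have unif: "uniform_limit ?S (\<lambda>n y. \<Sum>i<n. d i y) (\<lambda>y. \<Sum>i. d i y) sequentially"
    by (rule Weierstrass_m_test[OF bound_d \<open>summable M'\<close>])
  have "summable (\<lambda>n. f n x)"
    by (rule summable_comparison_test[OF _ \<open>summable M\<close>]) (use bound_f x in auto)
  have "\<exists>g. \<forall>y\<in>?S. (\<lambda>n. f n y) sums g y \<and>
          (g has_derivative (\<lambda>h. h *\<^sub>R (\<Sum>i. d i y))) (at y within ?S)"
  proof (rule has_derivative_series[where f'="\<lambda>n y h. h *\<^sub>R d n y"])
    show "(f n has_derivative (\<lambda>h. h *\<^sub>R d n y)) (at y within ?S)" if "y \<in> ?S" for n y
      using der[OF that] by (auto simp: has_vector_derivative_def intro: has_derivative_at_withinI)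
    show "\<forall>\<^sub>F n in sequentially. \<forall>y\<in>?S. \<forall>h.
        norm ((\<Sum>i<n. h *\<^sub>R d i y) - h *\<^sub>R (\<Sum>i. d i y)) \<le> e * norm h" if "e > 0" for e
      using uniform_limitD[OF unif that]
    proof eventually_elim
      case (elim n)
      show ?case
      proof (intro ballI allI)
        fix y h assume "y \<in> ?S"
        have "norm ((\<Sum>i<n. h *\<^sub>R d i y) - h *\<^sub>R (\<Sum>i. d i y))
            = \<bar>h\<bar> * norm ((\<Sum>i<n. d i y) - (\<Sum>i. d i y))"
          by (simp add: scaleR_sum_right[symmetric] scaleR_diff_right[symmetric])
        also have "\<dots> \<le> \<bar>h\<bar> * e"
          using elim \<open>y \<in> ?S\<close> by (intro mult_left_mono) (auto simp: dist_norm less_imp_le)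
        finally show "norm ((\<Sum>i<n. h *\<^sub>R d i y) - h *\<^sub>R (\<Sum>i. d i y)) \<le> e * norm h"
          by (simp add: mult.commute)
      qed
    qed
  qed (use x \<open>summable (\<lambda>n. f n x)\<close> in \<open>auto simp: summable_sums\<close>)
  then obtain g where g: "\<And>y. y \<in> ?S \<Longrightarrow> (\<lambda>n. f n y) sums g y"
    "\<And>y. y \<in> ?S \<Longrightarrow> (g has_derivative (\<lambda>h. h *\<^sub>R (\<Sum>i. d i y))) (at y within ?S)"
    by blast
  have "(g has_vector_derivative (\<Sum>i. d i x)) (at x)"
    using g(2)[OF x] x by (simp add: has_vector_derivative_def at_within_open[of x ?S])
  then show ?thesis
    by (rule has_vector_derivative_transform_within_open[where S="?S"])
       (use x g(1) in \<open>auto simp: sums_iff\<close>)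
qed

lemma has_vector_derivative_suminf_Suc:
  fixes f d :: "nat \<Rightarrow> real \<Rightarrow> 'a::banach"
  assumes der0: "\<And>y. y \<in> {a<..<c} \<Longrightarrow> (f 0 has_vector_derivative 0) (at y)"
    and der: "\<And>n y. y \<in> {a<..<c} \<Longrightarrow> (f (Suc n) has_vector_derivative d n y) (at y)"
    and bound_f: "\<And>n y. y \<in> {a<..<c} \<Longrightarrow> norm (f n y) \<le> M n"
    and bound_d: "\<And>n y. y \<in> {a<..<c} \<Longrightarrow> norm (d n y) \<le> M' n"
    and "summable M" "summable M'" and x: "x \<in> {a<..<c}"
  shows "((\<lambda>y. \<Sum>n. f n y) has_vector_derivative (\<Sum>n. d n x)) (at x)"
proof -
  let ?d = "\<lambda>n y. case n of 0 \<Rightarrow> 0 | Suc m \<Rightarrow> d m y"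
  let ?M' = "\<lambda>n. case n of 0 \<Rightarrow> 0 | Suc m \<Rightarrow> M' m"
  have "summable ?M'"
    by (subst summable_Suc_iff[symmetric]) (simp add: \<open>summable M'\<close>)
  moreover have "summable (\<lambda>n. d n x)"
    by (rule summable_comparison_test[OF _ \<open>summable M'\<close>]) (use bound_d x in auto)
  then have "(\<lambda>n. ?d (Suc n) x) sums (\<Sum>n. d n x)"
    by (simp add: summable_sums)
  then have "(\<Sum>n. ?d n x) = (\<Sum>n. d n x)"
    by (subst (asm) sums_Suc_iff) (simp add: sums_iff)
  moreover have "(f n has_vector_derivative ?d n y) (at y)" if "y \<in> {a<..<c}" for n y
    using der0[OF that] der[OF that] by (cases n) auto
  moreover have "norm (?d n y) \<le> ?M' n" if "y \<in> {a<..<c}" for n y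
    using bound_d[OF that] by (cases n) auto
  ultimately show ?thesis
    using has_vector_derivative_suminf[of a c f ?d M ?M' x] bound_f \<open>summable M\<close> x by simp
qed

definition lin_ode_solution ::
  "(real \<Rightarrow> complex) \<Rightarrow> (real \<Rightarrow> complex) \<Rightarrow> (real \<Rightarrow> complex) \<Rightarrow> bool" where
  "lin_ode_solution Q y y' \<longleftrightarrow>
     (\<forall>x>0. (y has_vector_derivative y' x) (at x) \<and> (y' has_vector_derivative Q x * y x) (at x))"

lemma lin_ode_solutionD:
  assumes "lin_ode_solution Q y y'" "x > 0"
  shows "(y has_vector_derivative y' x) (at x)" "(y' has_vector_derivative Q x * y x) (at x)"
  using assms by (auto simp: lin_ode_solution_def)

lemma continuous_on_lin_ode_solution:
  assumes "lin_ode_solution Q y y'"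
  shows "continuous_on {0<..} y" "continuous_on {0<..} y'"
  using assms unfolding lin_ode_solution_def
  by (auto intro!: continuous_at_imp_continuous_on intro: has_vector_derivative_continuous)

text \<open>The terms of the series solving \<open>y' = v, v' = Q y\<close> with initial values \<open>(\<alpha>, \<beta>)\<close> at 1.\<close>
fun picard_term ::
  "(real \<Rightarrow> complex) \<Rightarrow> complex \<Rightarrow> complex \<Rightarrow> nat \<Rightarrow> (real \<Rightarrow> complex) \<times> (real \<Rightarrow> complex)"
where
  "picard_term Q \<alpha> \<beta> 0 = (\<lambda>_. \<alpha>, \<lambda>_. \<beta>)"
| "picard_term Q \<alpha> \<beta> (Suc n) =
     (prim (snd (picard_term Q \<alpha> \<beta> n)), prim (\<lambda>t. Q t * fst (picard_term Q \<alpha> \<beta> n) t))"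

lemma continuous_on_picard_term:
  assumes "continuous_on {0<..} Q"
  shows "continuous_on {0<..} (fst (picard_term Q \<alpha> \<beta> n))"
    "continuous_on {0<..} (snd (picard_term Q \<alpha> \<beta> n))"
  by (induction n) (auto intro!: continuous_on_prim continuous_intros assms)

lemma has_vector_derivative_picard_term:
  assumes "continuous_on {0<..} Q" "x > 0"
  shows "(fst (picard_term Q \<alpha> \<beta> (Suc n)) has_vector_derivative snd (picard_term Q \<alpha> \<beta> n) x) (at x)"
    "(snd (picard_term Q \<alpha> \<beta> (Suc n)) has_vector_derivative Q x * fst (picard_term Q \<alpha> \<beta> n) x) (at x)"
  using continuous_on_picard_term[OF assms(1), of \<alpha> \<beta> n] assms
  by (auto intro!: has_vector_derivative_prim continuous_intros)

lemma picard_term_at_1: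
  "fst (picard_term Q \<alpha> \<beta> n) 1 = (if n = 0 then \<alpha> else 0)"
  "snd (picard_term Q \<alpha> \<beta> n) 1 = (if n = 0 then \<beta> else 0)"
  by (cases n; simp)+

lemma norm_picard_term_le:
  assumes Q: "continuous_on {0<..} Q" and ac: "0 < a" "a \<le> 1" "1 \<le> c"
    and L: "1 \<le> L" "\<And>t. t \<in> {a..c} \<Longrightarrow> norm (Q t) \<le> L"
    and K: "norm \<alpha> \<le> K" "norm \<beta> \<le> K" and x: "x \<in> {a..c}"
  shows "norm (fst (picard_term Q \<alpha> \<beta> n) x) \<le> K * L ^ n / fact n * \<bar>x - 1\<bar> ^ n
      \<and> norm (snd (picard_term Q \<alpha> \<beta> n) x) \<le> K * L ^ n / fact n * \<bar>x - 1\<bar> ^ n"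
  using x
proof (induction n arbitrary: x)
  case 0
  then show ?case using K by simp
next
  case (Suc n)
  let ?p = "fst (picard_term Q \<alpha> \<beta> n)" and ?r = "snd (picard_term Q \<alpha> \<beta> n)"
  let ?C = "K * L ^ n / fact n"
  have "0 \<le> K" using K(1) norm_ge_zero order_trans by blast
  have sub: "t \<in> {a..c}" if "t \<in> {min x 1..max x 1}" for t using that Suc.prems ac by auto
  have "norm (fst (picard_term Q \<alpha> \<beta> (Suc n)) x) \<le> ?C * \<bar>x - 1\<bar> ^ Suc n / Suc n"
    using norm_prim_le[of ?r x ?C n] continuous_on_picard_term[OF Q] Suc sub ac by auto
  also have "\<dots> = K * L ^ n / fact (Suc n) * \<bar>x - 1\<bar> ^ Suc n"
    by (simp add: field_simps)
  also have "\<dots> \<le> K * L ^ Suc n / fact (Suc n) * \<bar>x - 1\<bar> ^ Suc n"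
    using L \<open>0 \<le> K\<close> by (intro mult_right_mono divide_right_mono mult_left_mono) auto
  finally have "norm (fst (picard_term Q \<alpha> \<beta> (Suc n)) x) \<le> K * L ^ Suc n / fact (Suc n) * \<bar>x - 1\<bar> ^ Suc n" .
  moreover have "norm (Q t * ?p t) \<le> (L * ?C) * \<bar>t - 1\<bar> ^ n" if "t \<in> {min x 1..max x 1}" for t
  proof -
    have "norm (Q t * ?p t) \<le> L * (?C * \<bar>t - 1\<bar> ^ n)"
      unfolding norm_mult using L(2)[OF sub[OF that]] Suc.IH[OF sub[OF that]] L
      by (intro mult_mono) auto
    then show ?thesis by (simp add: mult.assoc)
  qed
  then have "norm (snd (picard_term Q \<alpha> \<beta> (Suc n)) x) \<le> (L * ?C) * \<bar>x - 1\<bar> ^ Suc n / Suc n"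
    using norm_prim_le[of "\<lambda>t. Q t * ?p t" x "L * ?C" n] continuous_on_picard_term[OF Q]
      Suc.prems ac by (auto intro!: continuous_intros Q)
  ultimately show ?case by (simp add: field_simps)
qed

lemma picard_terms_locally_dominated:
  assumes Q: "continuous_on {0<..} Q" and x: "x > 0"
  obtains a c L M where "0 < a" "a < x" "x < c" "summable M"
    "\<And>t n. t \<in> {a..c} \<Longrightarrow> norm (fst (picard_term Q \<alpha> \<beta> n) t) \<le> M n"
    "\<And>t n. t \<in> {a..c} \<Longrightarrow> norm (snd (picard_term Q \<alpha> \<beta> n) t) \<le> M n"
    "\<And>t. t \<in> {a..c} \<Longrightarrow> norm (Q t) \<le> L"
proof -
  define a where "a = min (x/2) (1/2)"
  define c where "c = max (2*x) 2"
  define K where "K = max (norm \<alpha>) (norm \<beta>)"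
  have ac: "0 < a" "a < x" "a \<le> 1" "x < c" "1 \<le> c" using x by (auto simp: a_def c_def)
  have "bounded (Q ` {a..c})"
    by (rule compact_imp_bounded[OF compact_continuous_image])
       (use ac in \<open>auto intro: continuous_on_subset[OF Q]\<close>)
  then obtain L where L: "1 \<le> L" "\<And>t. t \<in> {a..c} \<Longrightarrow> norm (Q t) \<le> L"
    unfolding bounded_iff by (metis image_eqI max.cobounded1 max.coboundedI2)
  define M where "M n = K * ((L * (c - a)) ^ n / fact n)" for n
  have "summable M" unfolding M_def
    by (rule summable_mult) (use exp_converges[of "L * (c - a)"] in \<open>auto simp: sums_iff field_simps\<close>)
  moreover have le_M: "K * L ^ n / fact n * \<bar>t - 1\<bar> ^ n \<le> M n" if "t \<in> {a..c}" for t n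
  proof -
    have "\<bar>t - 1\<bar> ^ n \<le> (c - a) ^ n" using that ac by (intro power_mono) auto
    then have "K * L ^ n / fact n * \<bar>t - 1\<bar> ^ n \<le> K * L ^ n / fact n * (c - a) ^ n"
      using L by (intro mult_left_mono) (auto simp: K_def le_max_iff_disj)
    then show ?thesis by (simp add: M_def power_mult_distrib)
  qed
  moreover have "norm \<alpha> \<le> K" "norm \<beta> \<le> K" by (auto simp: K_def)
  note bound = norm_picard_term_le[OF Q ac(1,3,5) L this]
  ultimately show ?thesis
    using that[of a c M L] ac L bound order_trans[OF conjunct1[OF bound] le_M]
      order_trans[OF conjunct2[OF bound] le_M] by blast
qed

lemma lin_ode_solution_exists:
  assumes Q: "continuous_on {0<..} Q"
  obtains y y' where "lin_ode_solution Q y y'" "y 1 = \<alpha>" "y' 1 = \<beta>"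
proof -
  let ?p = "\<lambda>n. fst (picard_term Q \<alpha> \<beta> n)" and ?r = "\<lambda>n. snd (picard_term Q \<alpha> \<beta> n)"
  define y where "y = (\<lambda>x. \<Sum>n. ?p n x)"
  define y' where "y' = (\<lambda>x. \<Sum>n. ?r n x)"
  have "(y has_vector_derivative y' x) (at x) \<and> (y' has_vector_derivative Q x * y x) (at x)"
    if "x > 0" for x
  proof -
    obtain a c L M where ac: "0 < a" "a < x" "x < c" and "summable M"
      and bound: "\<And>t n. t \<in> {a..c} \<Longrightarrow> norm (?p n t) \<le> M n"
        "\<And>t n. t \<in> {a..c} \<Longrightarrow> norm (?r n t) \<le> M n"
        "\<And>t. t \<in> {a..c} \<Longrightarrow> norm (Q t) \<le> L"
      using picard_terms_locally_dominated[OF Q \<open>x > 0\<close>] by metis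
    have der: "(?p (Suc n) has_vector_derivative ?r n t) (at t)"
      "(?r (Suc n) has_vector_derivative Q t * ?p n t) (at t)" if "t \<in> {a<..<c}" for n t
      using has_vector_derivative_picard_term[OF Q] that ac by auto
    have "0 \<le> L" using bound(3)[of x] ac by (auto intro: order_trans[OF norm_ge_zero])
    have "(y has_vector_derivative y' x) (at x)"
      unfolding y_def y'_def
      by (rule has_vector_derivative_suminf_Suc[of a c _ _ M M])
         (use ac bound der \<open>summable M\<close> in auto)
    moreover have "(y' has_vector_derivative (\<Sum>n. Q x * ?p n x)) (at x)"
      unfolding y'_def
      by (rule has_vector_derivative_suminf_Suc[of a c _ _ M "\<lambda>n. L * M n"])
         (use ac bound der \<open>summable M\<close> \<open>0 \<le> L\<close> in \<open>auto intro: summable_mult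
            simp: norm_mult intro!: mult_mono\<close>)
    moreover have "summable (\<lambda>n. ?p n x)"
      by (rule summable_comparison_test[OF _ \<open>summable M\<close>]) (use ac bound in auto)
    ultimately show ?thesis by (simp add: y_def suminf_mult)
  qed
  moreover have "y 1 = \<alpha>" "y' 1 = \<beta>"
    using sums_single[of 0 "\<lambda>_. \<alpha>"] sums_single[of 0 "\<lambda>_. \<beta>"]
    by (simp_all add: y_def y'_def picard_term_at_1 sums_iff)
  ultimately show ?thesis using that by (auto simp: lin_ode_solution_def)
qed

lemma lin_ode_wronskian_const:
  assumes s1: "lin_ode_solution Q y1 y1'" and s2: "lin_ode_solution Q y2 y2'" and x: "x > 0"
  shows "y1 x * y2' x - y1' x * y2 x = y1 1 * y2' 1 - y1' 1 * y2 1"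
proof -
  have "\<exists>c. \<forall>t\<in>{0<..}. y1 t * y2' t - y1' t * y2 t = c"
  proof (rule has_derivative_zero_constant)
    fix t :: real assume "t \<in> {0<..}"
    then have "((\<lambda>t. y1 t * y2' t - y1' t * y2 t) has_vector_derivative
        y1 t * (Q t * y2 t) + y1' t * y2' t - (y1' t * y2' t + Q t * y1 t * y2 t)) (at t)"
      using lin_ode_solutionD[OF s1] lin_ode_solutionD[OF s2]
      by (intro has_vector_derivative_diff has_vector_derivative_mult) auto
    then show "((\<lambda>t. y1 t * y2' t - y1' t * y2 t) has_derivative (\<lambda>h. 0)) (at t within {0<..})"
      by (auto simp: has_vector_derivative_def algebra_simps intro: has_derivative_at_withinI)
  qed simp
  then show ?thesis using x by force
qed

lemma lin_ode_fundamental_system: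
  assumes "continuous_on {0<..} Q"
  obtains y1 y1' y2 y2' where "lin_ode_solution Q y1 y1'" "lin_ode_solution Q y2 y2'"
    "\<And>x. x > 0 \<Longrightarrow> y1 x * y2' x - y1' x * y2 x = 1"
proof -
  obtain y1 y1' where s1: "lin_ode_solution Q y1 y1'" "y1 1 = 1" "y1' 1 = 0"
    using lin_ode_solution_exists[OF assms] .
  obtain y2 y2' where s2: "lin_ode_solution Q y2 y2'" "y2 1 = 0" "y2' 1 = 1"
    using lin_ode_solution_exists[OF assms] .
  show ?thesis using that[OF s1(1) s2(1)] lin_ode_wronskian_const[OF s1(1) s2(1)] s1 s2 by simp
qed

section \<open>Square integrability near infinity\<close>

text \<open>Bounded partial integrals rather than \<open>integrable_on {c..}\<close>; \<open>sq_integrable_at_topI\<close>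
  relates this to \<open>sq_int_near_infty\<close>.\<close>
definition sq_integrable_at_top :: "(real \<Rightarrow> complex) \<Rightarrow> bool" where
  "sq_integrable_at_top y \<longleftrightarrow> (\<exists>c>0. \<exists>N. \<forall>X\<ge>c. integral {c..X} (\<lambda>x. (cmod (y x))\<^sup>2) \<le> N)"

lemma integrable_on_Icc_if_continuous_on_pos:
  fixes f :: "real \<Rightarrow> 'a::banach"
  assumes "continuous_on {0<..} f" "p > 0"
  shows "f integrable_on {p..q}"
  by (rule integrable_continuous_real) (use assms in \<open>auto intro: continuous_on_subset\<close>)

lemma sq_integrable_at_topD:
  assumes "sq_integrable_at_top y" and y: "continuous_on {0<..} y" and "a > 0"
  obtains N where "\<And>X. X \<ge> a \<Longrightarrow> integral {a..X} (\<lambda>x. (cmod (y x))\<^sup>2) \<le> N"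
proof -
  let ?f = "\<lambda>x. (cmod (y x))\<^sup>2"
  obtain c N where "c > 0" and N: "\<And>X. X \<ge> c \<Longrightarrow> integral {c..X} ?f \<le> N"
    using assms(1) unfolding sq_integrable_at_top_def by blast
  have f: "continuous_on {0<..} ?f" by (auto intro!: continuous_intros y)
  define d where "d = max a c"
  have "integral {a..X} ?f \<le> \<bar>N\<bar> + integral {a..d} ?f" if "X \<ge> a" for X
  proof (cases "X \<le> d")
    case True
    have "integral {a..X} ?f \<le> integral {a..d} ?f"
      by (rule integral_subset_le) (use True \<open>a > 0\<close> in \<open>auto intro!: integrable_on_Icc_if_continuous_on_pos f\<close>)
    then show ?thesis by simp
  next
    case False
    have "integral {a..d} ?f + integral {d..X} ?f = integral {a..X} ?f"
      by (rule Henstock_Kurzweil_Integration.integral_combine)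
         (use False \<open>a > 0\<close> in \<open>auto simp: d_def intro!: integrable_on_Icc_if_continuous_on_pos f\<close>)
    moreover have "integral {d..X} ?f \<le> integral {c..X} ?f"
      by (rule integral_subset_le)
         (use False \<open>a > 0\<close> \<open>c > 0\<close> in \<open>auto simp: d_def intro!: integrable_on_Icc_if_continuous_on_pos f\<close>)
    moreover have "integral {c..X} ?f \<le> N" using N False by (simp add: d_def)
    ultimately show ?thesis by simp
  qed
  then show ?thesis using that by blast
qed

lemma sq_integrable_at_topI:
  assumes y: "continuous_on {0<..} y" and int: "(\<lambda>x. (cmod (y x))\<^sup>2) integrable_on {c..}"
  shows "sq_integrable_at_top y"
  unfolding sq_integrable_at_top_def
proof (intro exI conjI allI impI)
  show "max c 1 > 0" by simp
  fix X assume "X \<ge> max c 1"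
  show "integral {max c 1..X} (\<lambda>x. (cmod (y x))\<^sup>2) \<le> integral {c..} (\<lambda>x. (cmod (y x))\<^sup>2)"
    by (rule integral_subset_le)
       (use int in \<open>auto intro!: integrable_on_Icc_if_continuous_on_pos continuous_intros y\<close>)
qed

lemma integral_tail_le:
  fixes f :: "real \<Rightarrow> real"
  assumes f: "continuous_on {c..} f" and N: "\<And>X. X \<ge> c \<Longrightarrow> integral {c..X} f \<le> N" and "e > 0"
  obtains a where "a \<ge> c" "\<And>X. X \<ge> a \<Longrightarrow> integral {a..X} f \<le> e"
proof -
  define S where "S = (SUP X\<in>{c..}. integral {c..X} f)"
  have bdd: "bdd_above ((\<lambda>X. integral {c..X} f) ` {c..})" using N by (auto intro!: bdd_aboveI2)
  obtain a where a: "a \<ge> c" "S - e < integral {c..a} f"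
    using less_cSUP_iff[OF _ bdd, of "S - e"] \<open>e > 0\<close> unfolding S_def by auto
  have "integral {a..X} f \<le> e" if "X \<ge> a" for X
  proof -
    have "integral {c..a} f + integral {a..X} f = integral {c..X} f"
      by (rule Henstock_Kurzweil_Integration.integral_combine)
         (use a that in \<open>auto intro!: integrable_continuous_real intro: continuous_on_subset[OF f]\<close>)
    moreover have "integral {c..X} f \<le> S"
      unfolding S_def by (rule cSUP_upper[OF _ bdd]) (use a that in auto)
    ultimately show ?thesis using a by linarith
  qed
  then show ?thesis using that a by blast
qed

lemma sq_le_mult_if_quadratic_nonneg:
  fixes F G J :: real
  assumes "F \<ge> 0" and quadratic: "\<And>t. 0 \<le> t\<^sup>2 * F - 2 * t * J + G"
  shows "J\<^sup>2 \<le> F * G"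
proof (cases "F = 0")
  case True
  have "J = 0"
  proof (rule ccontr)
    assume "J \<noteq> 0"
    then show False using quadratic[of "(G + 1) / (2 * J)"] True by simp
  qed
  then show ?thesis using True by simp
next
  case False
  then have "0 \<le> G - J\<^sup>2 / F"
    using quadratic[of "J / F"] \<open>F \<ge> 0\<close> by (simp add: power2_eq_square field_simps)
  then show ?thesis using False \<open>F \<ge> 0\<close> by (simp add: field_simps)
qed

lemma integral_mult_sq_le:
  fixes f g :: "real \<Rightarrow> real"
  assumes f: "continuous_on {a..b} f" and g: "continuous_on {a..b} g"
  shows "(integral {a..b} (\<lambda>x. f x * g x))\<^sup>2
    \<le> integral {a..b} (\<lambda>x. (f x)\<^sup>2) * integral {a..b} (\<lambda>x. (g x)\<^sup>2)"
proof (rule sq_le_mult_if_quadratic_nonneg)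
  have int: "h integrable_on {a..b}" if "continuous_on {a..b} h" for h :: "real \<Rightarrow> real"
    using that by (rule integrable_continuous_real)
  show "0 \<le> integral {a..b} (\<lambda>x. (f x)\<^sup>2)"
    by (rule integral_nonneg) (auto intro!: int continuous_intros f)
  fix t :: real
  have "0 \<le> integral {a..b} (\<lambda>x. (t * f x - g x)\<^sup>2)"
    by (rule integral_nonneg) (auto intro!: int continuous_intros f g)
  also have "integral {a..b} (\<lambda>x. (t * f x - g x)\<^sup>2) = integral {a..b}
      (\<lambda>x. t\<^sup>2 * (f x)\<^sup>2 - 2 * t * (f x * g x) + (g x)\<^sup>2)"
    by (simp add: power2_eq_square algebra_simps)
  also have "\<dots> = t\<^sup>2 * integral {a..b} (\<lambda>x. (f x)\<^sup>2)
      - 2 * t * integral {a..b} (\<lambda>x. f x * g x) + integral {a..b} (\<lambda>x. (g x)\<^sup>2)"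
    by (subst integral_add integral_diff integral_mult_right;
        auto intro!: int continuous_intros f g)+
  finally show "0 \<le> t\<^sup>2 * integral {a..b} (\<lambda>x. (f x)\<^sup>2)
      - 2 * t * integral {a..b} (\<lambda>x. f x * g x) + integral {a..b} (\<lambda>x. (g x)\<^sup>2)" .
qed

section \<open>Potentials with \<open>Re Q \<ge> - A x\<^sup>2\<close>\<close>

lemma has_real_derivative_norm_sq:
  assumes "(y has_vector_derivative d) (at x)"
  shows "((\<lambda>x. (cmod (y x))\<^sup>2) has_real_derivative 2 * Re (d * cnj (y x))) (at x)"
proof -
  have "((\<lambda>x. Re (y x * cnj (y x))) has_real_derivative Re (y x * cnj d + d * cnj (y x))) (at x)"
    by (intro has_field_derivative_Re has_vector_derivative_mult assms has_vector_derivative_cnj)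
  then show ?thesis by (simp add: complex_mult_cnj cmod_power2)
qed

lemma lin_ode_has_real_derivative_Re_mult_cnj:
  assumes "lin_ode_solution Q y y'" "x > 0"
  shows "((\<lambda>x. Re (y' x * cnj (y x))) has_real_derivative
      (cmod (y' x))\<^sup>2 + Re (Q x) * (cmod (y x))\<^sup>2) (at x)"
proof -
  have "((\<lambda>x. Re (y' x * cnj (y x))) has_real_derivative
      Re (y' x * cnj (y' x) + Q x * y x * cnj (y x))) (at x)"
    by (intro has_field_derivative_Re has_vector_derivative_mult has_vector_derivative_cnj
        lin_ode_solutionD[OF assms])
  then show ?thesis by (simp add: mult.assoc complex_mult_cnj cmod_power2)
qed

lemma weighted_cross_term_le:
  fixes A x p q r :: real
  assumes "A \<ge> 1" "x \<ge> 1" "p \<ge> 0" "q \<ge> 0" "r \<le> p * q"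
  shows "r * (2 * A * x) / (A * x\<^sup>2)\<^sup>2 \<le> p\<^sup>2 / (A * x\<^sup>2) / 2 + 2 * q\<^sup>2"
proof -
  have "1 * 1 \<le> A * x\<^sup>2" using assms by (intro mult_mono) (auto simp: one_le_power)
  then have M: "A * x\<^sup>2 \<ge> 1" by simp
  have "2 * (x * p) * q \<le> (x * p)\<^sup>2 / 2 + 2 * q\<^sup>2"
    using sum_squares_bound[of "x * p / 2" q] by (simp add: power2_eq_square field_simps)
  then have "r * (2 * A * x) \<le> A * ((x * p)\<^sup>2 / 2 + 2 * q\<^sup>2)"
  proof -
    have "r * (2 * A * x) \<le> (p * q) * (2 * A * x)"
      using assms by (intro mult_right_mono) auto
    also have "\<dots> = A * (2 * (x * p) * q)" by (simp add: algebra_simps)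
    finally show ?thesis
      using mult_left_mono[OF \<open>2 * (x * p) * q \<le> _\<close>, of A] assms by linarith
  qed
  also have "\<dots> \<le> p\<^sup>2 * (A * x\<^sup>2) / 2 + 2 * q\<^sup>2 * (A * x\<^sup>2)\<^sup>2"
  proof -
    have "A * (2 * q\<^sup>2) \<le> (A * x\<^sup>2) * (2 * q\<^sup>2)"
      using assms by (intro mult_right_mono mult_left_mono) (auto simp: one_le_power)
    also have "\<dots> \<le> (A * x\<^sup>2)\<^sup>2 * (2 * q\<^sup>2)"
      using mult_left_mono[OF M, of "A * x\<^sup>2"] M by (intro mult_right_mono) (auto simp: power2_eq_square)
    finally show ?thesis by (simp add: algebra_simps)
  qed
  finally have "r * (2 * A * x) / (A * x\<^sup>2)\<^sup>2
      \<le> (p\<^sup>2 * (A * x\<^sup>2) / 2 + 2 * q\<^sup>2 * (A * x\<^sup>2)\<^sup>2) / (A * x\<^sup>2)\<^sup>2"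
    by (rule divide_right_mono) simp
  also have "\<dots> = p\<^sup>2 / (A * x\<^sup>2) / 2 + 2 * q\<^sup>2"
    using assms by (simp add: field_simps power2_eq_square)
  finally show ?thesis .
qed

lemma lin_ode_has_real_derivative_weighted_Re_mult_cnj:
  assumes s: "lin_ode_solution Q y y'" and "x > 0" "A > 0"
  shows "((\<lambda>x. Re (y' x * cnj (y x)) / (A * x\<^sup>2)) has_real_derivative
      (cmod (y' x))\<^sup>2 / (A * x\<^sup>2) + Re (Q x) * (cmod (y x))\<^sup>2 / (A * x\<^sup>2)
      - Re (y' x * cnj (y x)) * (2 * A * x) / (A * x\<^sup>2)\<^sup>2) (at x)"
proof -
  have "((\<lambda>x. A * x\<^sup>2) has_real_derivative 2 * A * x) (at x)"
    by (auto intro!: derivative_eq_intros)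
  with lin_ode_has_real_derivative_Re_mult_cnj[OF s \<open>x > 0\<close>]
  have "((\<lambda>x. Re (y' x * cnj (y x)) / (A * x\<^sup>2)) has_real_derivative
      (((cmod (y' x))\<^sup>2 + Re (Q x) * (cmod (y x))\<^sup>2) * (A * x\<^sup>2) - Re (y' x * cnj (y x)) * (2 * A * x))
        / ((A * x\<^sup>2) * (A * x\<^sup>2))) (at x)"
    by (rule DERIV_divide) (use assms in simp)
  moreover have "(((cmod (y' x))\<^sup>2 + Re (Q x) * (cmod (y x))\<^sup>2) * (A * x\<^sup>2)
      - Re (y' x * cnj (y x)) * (2 * A * x)) / ((A * x\<^sup>2) * (A * x\<^sup>2))
    = (cmod (y' x))\<^sup>2 / (A * x\<^sup>2) + Re (Q x) * (cmod (y x))\<^sup>2 / (A * x\<^sup>2)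
      - Re (y' x * cnj (y x)) * (2 * A * x) / (A * x\<^sup>2)\<^sup>2"
    using assms by (simp add: diff_divide_distrib add_divide_distrib power2_eq_square)
  ultimately show ?thesis by simp
qed

lemma lin_ode_weighted_energy_le:
  fixes Q y y' :: "real \<Rightarrow> complex"
  assumes s: "lin_ode_solution Q y y'"
    and A: "A \<ge> 1" and a: "a \<ge> 1" and Re_Q: "\<And>x. x \<ge> a \<Longrightarrow> Re (Q x) \<ge> - (A * x\<^sup>2)"
    and X: "X \<ge> a"
  shows "integral {a..X} (\<lambda>x. (cmod (y' x))\<^sup>2 / (A * x\<^sup>2))
    \<le> 2 * (Re (y' X * cnj (y X)) / (A * X\<^sup>2) - Re (y' a * cnj (y a)) / (A * a\<^sup>2))
      + 6 * integral {a..X} (\<lambda>x. (cmod (y x))\<^sup>2)"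
proof -
  define M where "M x = A * x\<^sup>2" for x :: real
  define h where "h x = Re (y' x * cnj (y x))" for x
  define u where "u x = (cmod (y' x))\<^sup>2 / M x" for x
  define v where "v x = (cmod (y x))\<^sup>2" for x
  define g' where "g' x = u x + Re (Q x) * v x / M x - h x * (2 * A * x) / (M x)\<^sup>2" for x
  have M_pos: "M x > 0" if "x > 0" for x using that A by (simp add: M_def)
  have "((\<lambda>x. h x / M x) has_real_derivative g' x) (at x)" if "x > 0" for x
    using lin_ode_has_real_derivative_weighted_Re_mult_cnj[OF s that, of A] A
    by (simp add: g'_def u_def v_def h_def[abs_def] M_def[abs_def])
  then have ftc: "(g' has_integral (h X / M X - h a / M a)) {a..X}"
    using X a by (intro fundamental_theorem_of_calculus)
      (auto simp: has_real_derivative_iff_has_vector_derivative[symmetric]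
        intro: has_field_derivative_at_within)
  have cont: "continuous_on {0<..} u" "continuous_on {0<..} v"
    using continuous_on_lin_ode_solution[OF s] A
    by (auto simp: u_def v_def M_def intro!: continuous_intros)
  have "u x \<le> 2 * g' x + 6 * v x" if x: "x \<ge> a" for x
  proof -
    have "- (M x) * v x \<le> Re (Q x) * v x" using Re_Q[OF x] by (intro mult_right_mono) (auto simp: M_def v_def)
    then have "- v x \<le> Re (Q x) * v x / M x" using M_pos[of x] x a by (simp add: field_simps)
    moreover have "h x \<le> cmod (y' x) * cmod (y x)"
      unfolding h_def by (metis abs_Re_le_cmod abs_le_D1 complex_mod_cnj norm_mult)
    from weighted_cross_term_le[OF A _ _ _ this] x a
    have "h x * (2 * A * x) / (M x)\<^sup>2 \<le> u x / 2 + 2 * v x" by (simp add: M_def u_def v_def)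
    ultimately show ?thesis by (simp add: g'_def)
  qed
  then have "integral {a..X} u \<le> integral {a..X} (\<lambda>x. 2 * g' x + 6 * v x)"
    using a ftc by (intro integral_le integrable_add integrable_on_mult_right)
      (auto intro: integrable_on_Icc_if_continuous_on_pos cont has_integral_integrable)
  also have "\<dots> = 2 * (h X / M X - h a / M a) + 6 * integral {a..X} v"
    using a by (intro integral_unique has_integral_add has_integral_mult_right ftc integrable_integral
        integrable_on_Icc_if_continuous_on_pos cont) auto
  finally show ?thesis by (simp add: u_def[abs_def] v_def[abs_def] h_def M_def)
qed

lemma integral_norm_sq_unbounded_if_Re_mult_cnj_ge:
  fixes y y' :: "real \<Rightarrow> complex"
  assumes y: "continuous_on {a..} y" and "a \<le> X0"
    and der: "\<And>x. x \<ge> X0 \<Longrightarrow> (y has_vector_derivative y' x) (at x)"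
    and Re_ge: "\<And>x. x \<ge> X0 \<Longrightarrow> 1 \<le> Re (y' x * cnj (y x))"
  obtains X where "X \<ge> a" "integral {a..X} (\<lambda>x. (cmod (y x))\<^sup>2) > N"
proof -
  let ?v = "\<lambda>x. (cmod (y x))\<^sup>2"
  have v: "continuous_on {p..q} ?v" if "p \<ge> a" for p q
    using that by (auto intro!: continuous_intros intro: continuous_on_subset[OF y])
  have grow: "2 * x - 2 * X0 \<le> ?v x" if "x \<ge> X0" for x
  proof -
    have "?v X0 - 2 * X0 \<le> ?v x - 2 * x"
    proof (rule DERIV_nonneg_imp_increasing_open[OF that])
      fix t assume "X0 < t" "t < x"
      then have "((\<lambda>x. ?v x - 2 * x) has_real_derivative 2 * Re (y' t * cnj (y t)) - 2) (at t)"
        by (intro derivative_intros has_real_derivative_norm_sq der) auto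
      then show "\<exists>d. ((\<lambda>x. ?v x - 2 * x) has_real_derivative d) (at t) \<and> d \<ge> 0"
        using Re_ge[of t] \<open>X0 < t\<close> by force
    next
      show "continuous_on {X0..x} (\<lambda>x. ?v x - 2 * x)"
        by (rule continuous_on_diff[OF v]) (use \<open>a \<le> X0\<close> in \<open>auto intro!: continuous_intros\<close>)
    qed
    then show ?thesis using zero_le_power2[of "cmod (y X0)"] by linarith
  qed
  define X where "X = X0 + \<bar>N\<bar> + 2"
  have "integral {X0 + 1..X} (\<lambda>_. 1) \<le> integral {X0 + 1..X} ?v"
  proof (rule integral_le)
    show "1 \<le> ?v x" if "x \<in> {X0 + 1..X}" for x using grow[of x] that by auto
  qed (use \<open>a \<le> X0\<close> in \<open>auto intro!: integrable_continuous_real v\<close>)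
  then have "X - (X0 + 1) \<le> integral {X0 + 1..X} ?v" by (simp add: X_def)
  also have "\<dots> \<le> integral {a..X} ?v"
    by (rule integral_subset_le)
       (use \<open>a \<le> X0\<close> v[of "X0 + 1" X] v[of a X] in \<open>auto intro!: integrable_continuous_real\<close>)
  finally show ?thesis using that[of X] \<open>a \<le> X0\<close> by (simp add: X_def)
qed

text \<open>Were the weighted energy unbounded, \<open>lin_ode_weighted_energy_le\<close> would force
  \<open>Re (y' * cnj y) \<ge> A x\<^sup>2 \<ge> 1\<close> eventually, so that \<open>\<bar>y\<bar>\<^sup>2\<close> grows linearly.\<close>
lemma lin_ode_weighted_deriv_sq_bounded:
  fixes Q y y' :: "real \<Rightarrow> complex"
  assumes s: "lin_ode_solution Q y y'"
    and A: "A \<ge> 1" and a: "a \<ge> 1" and Re_Q: "\<And>x. x \<ge> a \<Longrightarrow> Re (Q x) \<ge> - (A * x\<^sup>2)"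
    and N: "\<And>X. X \<ge> a \<Longrightarrow> integral {a..X} (\<lambda>x. (cmod (y x))\<^sup>2) \<le> N"
  obtains G where "\<And>X. X \<ge> a \<Longrightarrow> integral {a..X} (\<lambda>x. (cmod (y' x))\<^sup>2 / (A * x\<^sup>2)) \<le> G"
proof -
  let ?F = "\<lambda>X. integral {a..X} (\<lambda>x. (cmod (y' x))\<^sup>2 / (A * x\<^sup>2))"
  let ?g = "\<lambda>x. Re (y' x * cnj (y x)) / (A * x\<^sup>2)"
  define C where "C = 6 * N - 2 * ?g a"
  have F_le: "?F X \<le> 2 * ?g X + C" if "X \<ge> a" for X
    using lin_ode_weighted_energy_le[OF s A a Re_Q that] N[OF that] by (simp add: C_def)
  show thesis
  proof (cases "\<forall>X\<ge>a. ?F X \<le> C + 2")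
    case True
    then show ?thesis using that by blast
  next
    case False
    then obtain X2 where X2: "X2 \<ge> a" "?F X2 > C + 2" by (auto simp: not_le)
    have "1 \<le> Re (y' x * cnj (y x))" if "x \<ge> X2" for x
    proof -
      have "?F X2 \<le> ?F x"
        using X2 that a A continuous_on_lin_ode_solution[OF s]
        by (intro integral_subset_le integrable_on_Icc_if_continuous_on_pos) (auto intro!: continuous_intros)
      then have "1 < ?g x" using F_le[of x] X2 that by linarith
      moreover have "1 * 1 \<le> A * x\<^sup>2" using A a X2 that by (intro mult_mono) (auto simp: one_le_power)
      ultimately show ?thesis by (simp add: field_simps)
    qed
    moreover have "continuous_on {a..} y"
      using continuous_on_lin_ode_solution(1)[OF s] a by (auto intro: continuous_on_subset)
    moreover have "(y has_vector_derivative y' x) (at x)" if "x \<ge> X2" for x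
      using lin_ode_solutionD(1)[OF s] that X2 a by simp
    ultimately obtain X where "X \<ge> a" "integral {a..X} (\<lambda>x. (cmod (y x))\<^sup>2) > N"
      using integral_norm_sq_unbounded_if_Re_mult_cnj_ge[OF _ X2(1)] by blast
    then show ?thesis using N by fastforce
  qed
qed

lemma inverse_le_half_sum_sq:
  fixes s p1 q1 p2 q2 :: real
  assumes "s > 0" "1 \<le> p1 * q2 + q1 * p2"
  shows "1 / s \<le> (p1\<^sup>2 + q2\<^sup>2 / s\<^sup>2 + p2\<^sup>2 + q1\<^sup>2 / s\<^sup>2) / 2"
proof -
  have "1 / s \<le> p1 * (q2 / s) + p2 * (q1 / s)"
    using divide_right_mono[OF assms(2), of s] assms(1) by (simp add: add_divide_distrib mult.commute)
  moreover have "2 * (p1 * (q2 / s)) \<le> p1\<^sup>2 + (q2 / s)\<^sup>2" "2 * (p2 * (q1 / s)) \<le> p2\<^sup>2 + (q1 / s)\<^sup>2"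
    using sum_squares_bound[of p1 "q2 / s"] sum_squares_bound[of p2 "q1 / s"] by (simp_all add: mult.assoc)
  ultimately show ?thesis by (simp add: power_divide)
qed

lemma integral_unbounded_if_ge_inverse:
  fixes f :: "real \<Rightarrow> real"
  assumes f: "continuous_on {a..} f" and "a > 0" "c > 0" and ge: "\<And>x. x \<ge> a \<Longrightarrow> c / x \<le> f x"
  obtains X where "X \<ge> a" "integral {a..X} f > R"
proof -
  define X where "X = a * exp ((\<bar>R\<bar> + 1) / c)"
  have X: "X \<ge> a" using \<open>a > 0\<close> \<open>c > 0\<close> by (simp add: X_def)
  have "((\<lambda>x. c / x) has_integral (c * ln X - c * ln a)) {a..X}"
    using X \<open>a > 0\<close> by (intro fundamental_theorem_of_calculus)
      (auto intro!: derivative_eq_intros simp: has_real_derivative_iff_has_vector_derivative[symmetric])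
  moreover have "c * ln X - c * ln a = \<bar>R\<bar> + 1"
    using \<open>a > 0\<close> \<open>c > 0\<close> by (simp add: X_def ln_mult field_simps)
  moreover have "f integrable_on {a..X}"
    by (rule integrable_continuous_real) (auto intro: continuous_on_subset[OF f])
  ultimately have "\<bar>R\<bar> + 1 \<le> integral {a..X} f"
    using ge by (metis integral_le has_integral_integrable integral_unique atLeastAtMost_iff)
  then show ?thesis using that X by fastforce
qed

lemma eventually_ge_neg_quadratic_if_Liminf:
  fixes f :: "real \<Rightarrow> real"
  assumes "Liminf at_top (\<lambda>z. ereal (f z / z\<^sup>2)) > - \<infinity>"
  obtains A x0 where "A \<ge> 1" "x0 \<ge> 1" "\<And>x. x \<ge> x0 \<Longrightarrow> f x + c \<ge> - (A * x\<^sup>2)"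
proof -
  obtain r where "ereal r < Liminf at_top (\<lambda>z. ereal (f z / z\<^sup>2))"
    using ereal_dense2[OF assms] by blast
  from less_LiminfD[OF this] obtain x1 where x1: "\<And>z. z \<ge> x1 \<Longrightarrow> r < f z / z\<^sup>2"
    unfolding eventually_at_top_linorder by auto
  define A where "A = \<bar>r\<bar> + \<bar>c\<bar> + 1"
  have "f x + c \<ge> - (A * x\<^sup>2)" if "x \<ge> max x1 1" for x
  proof -
    have "1 \<le> x\<^sup>2" using that by (simp add: one_le_power)
    then have "r * x\<^sup>2 < f x" using x1[of x] that by (simp add: field_simps)
    moreover have "- \<bar>r\<bar> * x\<^sup>2 \<le> r * x\<^sup>2" by (intro mult_right_mono) auto
    moreover have "- \<bar>c\<bar> * x\<^sup>2 \<le> c" using \<open>1 \<le> x\<^sup>2\<close>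
      by (smt (verit) abs_ge_zero mult_le_cancel_left1 mult_minus_left)
    ultimately show ?thesis using \<open>1 \<le> x\<^sup>2\<close> by (simp add: A_def algebra_simps)
  qed
  then show ?thesis using that[of A "max x1 1"] by (simp add: A_def)
qed

lemma lin_ode_not_limit_circle_if_Re_ge:
  fixes Q y1 y1' y2 y2' :: "real \<Rightarrow> complex"
  assumes s1: "lin_ode_solution Q y1 y1'" and s2: "lin_ode_solution Q y2 y2'"
    and W: "\<And>x. x > 0 \<Longrightarrow> y1 x * y2' x - y1' x * y2 x = 1"
    and A: "A \<ge> 1" and a: "a \<ge> 1" and Re_Q: "\<And>x. x \<ge> a \<Longrightarrow> Re (Q x) \<ge> - (A * x\<^sup>2)"
  shows "\<not> (sq_integrable_at_top y1 \<and> sq_integrable_at_top y2)"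
proof
  assume sq: "sq_integrable_at_top y1 \<and> sq_integrable_at_top y2"
  note cont = continuous_on_lin_ode_solution[OF s1] continuous_on_lin_ode_solution[OF s2]
  have "a > 0" using a by simp
  obtain N1 where N1: "\<And>X. X \<ge> a \<Longrightarrow> integral {a..X} (\<lambda>x. (cmod (y1 x))\<^sup>2) \<le> N1"
    using sq_integrable_at_topD[OF conjunct1[OF sq] cont(1) \<open>a > 0\<close>] by blast
  obtain N2 where N2: "\<And>X. X \<ge> a \<Longrightarrow> integral {a..X} (\<lambda>x. (cmod (y2 x))\<^sup>2) \<le> N2"
    using sq_integrable_at_topD[OF conjunct2[OF sq] cont(3) \<open>a > 0\<close>] by blast
  obtain G1 where G1: "\<And>X. X \<ge> a \<Longrightarrow> integral {a..X} (\<lambda>x. (cmod (y1' x))\<^sup>2 / (A * x\<^sup>2)) \<le> G1"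
    using lin_ode_weighted_deriv_sq_bounded[OF s1 A a Re_Q N1] by blast
  obtain G2 where G2: "\<And>X. X \<ge> a \<Longrightarrow> integral {a..X} (\<lambda>x. (cmod (y2' x))\<^sup>2 / (A * x\<^sup>2)) \<le> G2"
    using lin_ode_weighted_deriv_sq_bounded[OF s2 A a Re_Q N2] by blast
  define f where "f x = ((cmod (y1 x))\<^sup>2 + (cmod (y2' x))\<^sup>2 / (A * x\<^sup>2)
    + (cmod (y2 x))\<^sup>2 + (cmod (y1' x))\<^sup>2 / (A * x\<^sup>2)) / 2" for x
  have f_cont: "continuous_on {0<..} f"
    unfolding f_def using A by (auto intro!: continuous_intros cont)
  have f_ge: "(1 / sqrt A) / x \<le> f x" if "x \<ge> a" for x
  proof -
    have "1 = cmod (y1 x * y2' x - y1' x * y2 x)" using W[of x] that a by simp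
    also have "\<dots> \<le> cmod (y1 x) * cmod (y2' x) + cmod (y1' x) * cmod (y2 x)"
      by (metis norm_mult norm_triangle_ineq4)
    finally show ?thesis
      using inverse_le_half_sum_sq[of "sqrt A * x"] that a A by (simp add: f_def power_mult_distrib)
  qed
  have f_bounded: "integral {a..X} f \<le> (N1 + G2 + N2 + G1) / 2" if "X \<ge> a" for X
  proof -
    have int: "g integrable_on {a..X}" if "continuous_on {0<..} g" for g :: "real \<Rightarrow> real"
      using that a by (intro integrable_on_Icc_if_continuous_on_pos) auto
    have "integral {a..X} f = (integral {a..X} (\<lambda>x. (cmod (y1 x))\<^sup>2)
        + integral {a..X} (\<lambda>x. (cmod (y2' x))\<^sup>2 / (A * x\<^sup>2)) + integral {a..X} (\<lambda>x. (cmod (y2 x))\<^sup>2)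
        + integral {a..X} (\<lambda>x. (cmod (y1' x))\<^sup>2 / (A * x\<^sup>2))) / 2"
      unfolding f_def using A
      by (intro integral_unique has_integral_divide has_integral_add integrable_integral int)
        (auto intro!: continuous_intros cont)
    then show ?thesis using N1[OF that] N2[OF that] G1[OF that] G2[OF that] by simp
  qed
  have "continuous_on {a..} f" using f_cont a by (auto intro: continuous_on_subset)
  moreover have "1 / sqrt A > 0" using A by simp
  ultimately obtain X where "X \<ge> a" "integral {a..X} f > (N1 + G2 + N2 + G1) / 2"
    using integral_unbounded_if_ge_inverse[OF _ \<open>a > 0\<close> _ f_ge] by blast
  with f_bounded show False by fastforce
qed

section \<open>Weyl's alternative and the drift potential\<close>

lemma norm_le_norm_add_integral_of_deriv:
  fixes w :: "real \<Rightarrow> 'a::banach"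
  assumes "a \<le> x" and der: "\<And>t. t \<in> {a..x} \<Longrightarrow> (w has_vector_derivative w' t) (at t)"
    and bound: "\<And>t. t \<in> {a..x} \<Longrightarrow> norm (w' t) \<le> g t" and g: "g integrable_on {a..x}"
  shows "norm (w x) \<le> norm (w a) + integral {a..x} g"
proof -
  have "(w' has_integral (w x - w a)) {a..x}"
    using \<open>a \<le> x\<close> der by (intro fundamental_theorem_of_calculus) (auto intro: has_vector_derivative_at_within)
  then have "norm (w x - w a) \<le> integral {a..x} g"
    using integral_norm_bound_integral[OF _ g bound] by (auto simp: integral_unique has_integral_integrable)
  then show ?thesis using norm_triangle_sub[of "w x" "w a"] by linarith
qed

lemma lin_ode_has_vector_derivative_cross:
  assumes "lin_ode_solution Q y y'" "lin_ode_solution Q0 z z'" "x > 0"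
  shows "((\<lambda>x. z x * y' x - z' x * y x) has_vector_derivative (Q x - Q0 x) * z x * y x) (at x)"
proof -
  have "((\<lambda>x. z x * y' x - z' x * y x) has_vector_derivative
      z x * (Q x * y x) + z' x * y' x - (z' x * y' x + Q0 x * z x * y x)) (at x)"
    using lin_ode_solutionD[OF assms(1,3)] lin_ode_solutionD[OF assms(2,3)]
    by (intro has_vector_derivative_diff has_vector_derivative_mult)
  then show ?thesis by (simp add: algebra_simps)
qed

lemma integral_sq_le_if_le_integral_mult:
  fixes u \<eta> :: "real \<Rightarrow> real"
  assumes u: "continuous_on {a..} u" and \<eta>: "continuous_on {a..} \<eta>"
    and u_nonneg: "\<And>x. x \<ge> a \<Longrightarrow> 0 \<le> u x"
    and u_le: "\<And>x. x \<ge> a \<Longrightarrow> u x \<le> (C + D * integral {a..x} (\<lambda>t. u t * \<eta> t)) * \<eta> x"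
    and \<eta>_small: "\<And>X. X \<ge> a \<Longrightarrow> integral {a..X} (\<lambda>t. (\<eta> t)\<^sup>2) \<le> \<epsilon>"
    and \<epsilon>: "2 * D\<^sup>2 * \<epsilon>\<^sup>2 \<le> 1 / 2" and X: "X \<ge> a"
  shows "integral {a..X} (\<lambda>t. (u t)\<^sup>2) \<le> 4 * C\<^sup>2 * \<epsilon>"
proof -
  define Z where "Z x = integral {a..x} (\<lambda>t. (u t)\<^sup>2)" for x
  define J where "J x = integral {a..x} (\<lambda>t. u t * \<eta> t)" for x
  have int: "f integrable_on {a..x}" if "continuous_on {a..} f" for f :: "real \<Rightarrow> real" and x
    using that by (intro integrable_continuous_real) (auto intro: continuous_on_subset)
  have "0 \<le> \<epsilon>" using \<eta>_small[of a] by simp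
  have Z_nonneg: "0 \<le> Z x" for x
    unfolding Z_def by (rule integral_nonneg) (auto intro!: int continuous_intros u)
  have J_sq: "(J x)\<^sup>2 \<le> Z X * \<epsilon>" if "a \<le> x" "x \<le> X" for x
  proof -
    have "(J x)\<^sup>2 \<le> Z x * integral {a..x} (\<lambda>t. (\<eta> t)\<^sup>2)"
      unfolding J_def Z_def
      by (rule integral_mult_sq_le) (auto intro: continuous_on_subset[OF u] continuous_on_subset[OF \<eta>])
    also have "\<dots> \<le> Z x * \<epsilon>" using \<eta>_small[OF that(1)] Z_nonneg by (intro mult_left_mono) auto
    also have "\<dots> \<le> Z X * \<epsilon>"
      unfolding Z_def using that u_nonneg \<open>0 \<le> \<epsilon>\<close>
      by (intro mult_right_mono integral_subset_le) (auto intro!: int continuous_intros u)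
    finally show ?thesis .
  qed
  define K where "K = 2 * C\<^sup>2 + 2 * D\<^sup>2 * \<epsilon> * Z X"
  have "(u x)\<^sup>2 \<le> K * (\<eta> x)\<^sup>2" if "x \<in> {a..X}" for x
  proof -
    have "(u x)\<^sup>2 \<le> (C + D * J x)\<^sup>2 * (\<eta> x)\<^sup>2"
      using u_le[of x] u_nonneg[of x] that unfolding J_def power_mult_distrib[symmetric]
      by (intro power_mono) auto
    also have "\<dots> \<le> (2 * C\<^sup>2 + 2 * D\<^sup>2 * (J x)\<^sup>2) * (\<eta> x)\<^sup>2"
      using sum_squares_bound[of C "D * J x"]
      by (intro mult_right_mono) (auto simp: power2_eq_square algebra_simps)
    also have "\<dots> \<le> K * (\<eta> x)\<^sup>2"
    proof -
      have "2 * D\<^sup>2 * (J x)\<^sup>2 \<le> 2 * D\<^sup>2 * (Z X * \<epsilon>)"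
        using J_sq[of x] that by (intro mult_left_mono) auto
      then show ?thesis unfolding K_def by (intro mult_right_mono) (auto simp: algebra_simps)
    qed
    finally show ?thesis .
  qed
  then have "Z X \<le> integral {a..X} (\<lambda>x. K * (\<eta> x)\<^sup>2)"
    unfolding Z_def by (intro integral_le) (auto intro!: int continuous_intros u \<eta>)
  also have "\<dots> \<le> K * \<epsilon>"
    using \<eta>_small[OF X] Z_nonneg \<open>0 \<le> \<epsilon>\<close> by (auto simp: K_def intro!: mult_left_mono)
  also have "\<dots> \<le> 2 * C\<^sup>2 * \<epsilon> + Z X / 2"
    using mult_right_mono[OF \<epsilon> Z_nonneg[of X]] by (simp add: K_def power2_eq_square algebra_simps)
  finally show ?thesis by (simp add: Z_def)
qed

lemma sq_integrable_at_top_sum_tail_le: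
  assumes "sq_integrable_at_top y1" "sq_integrable_at_top y2"
    and y1: "continuous_on {0<..} y1" and y2: "continuous_on {0<..} y2" and "\<epsilon> > 0"
  obtains a where "a \<ge> 1" "\<And>X. X \<ge> a \<Longrightarrow> integral {a..X} (\<lambda>x. (cmod (y1 x) + cmod (y2 x))\<^sup>2) \<le> \<epsilon>"
proof -
  obtain N1 where N1: "\<And>X. X \<ge> 1 \<Longrightarrow> integral {1..X} (\<lambda>x. (cmod (y1 x))\<^sup>2) \<le> N1"
    using sq_integrable_at_topD[OF assms(1) y1, of 1] by auto
  obtain N2 where N2: "\<And>X. X \<ge> 1 \<Longrightarrow> integral {1..X} (\<lambda>x. (cmod (y2 x))\<^sup>2) \<le> N2"
    using sq_integrable_at_topD[OF assms(2) y2, of 1] by auto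
  have int: "f integrable_on {1..X}" if "continuous_on {0<..} f" for f :: "real \<Rightarrow> real" and X
    using that by (rule integrable_on_Icc_if_continuous_on_pos) simp
  have bound: "integral {1..X} (\<lambda>x. (cmod (y1 x) + cmod (y2 x))\<^sup>2) \<le> 2 * N1 + 2 * N2"
    if "X \<ge> 1" for X
  proof -
    have "integral {1..X} (\<lambda>x. (cmod (y1 x) + cmod (y2 x))\<^sup>2)
        \<le> integral {1..X} (\<lambda>x. 2 * (cmod (y1 x))\<^sup>2 + 2 * (cmod (y2 x))\<^sup>2)"
      using sum_squares_bound[of "cmod (y1 _)" "cmod (y2 _)"]
      by (intro integral_le) (auto intro!: int continuous_intros y1 y2 simp: power2_eq_square algebra_simps)
    also have "\<dots> = 2 * integral {1..X} (\<lambda>x. (cmod (y1 x))\<^sup>2) + 2 * integral {1..X} (\<lambda>x. (cmod (y2 x))\<^sup>2)"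
      by (intro integral_unique has_integral_add has_integral_mult_right integrable_integral int
          continuous_intros y1 y2)
    finally show ?thesis using N1[OF that] N2[OF that] by simp
  qed
  have "continuous_on {1..} (\<lambda>x. (cmod (y1 x) + cmod (y2 x))\<^sup>2)"
    by (auto intro!: continuous_intros intro: continuous_on_subset[OF y1] continuous_on_subset[OF y2])
  then show ?thesis using integral_tail_le[OF _ bound \<open>\<epsilon> > 0\<close>] that by blast
qed

lemma lin_ode_variation_of_constants_le:
  fixes Q Q0 y1 y1' y2 y2' z z' :: "real \<Rightarrow> complex"
  assumes s1: "lin_ode_solution Q y1 y1'" and s2: "lin_ode_solution Q y2 y2'"
    and W: "\<And>x. x > 0 \<Longrightarrow> y1 x * y2' x - y1' x * y2 x = 1"
    and s0: "lin_ode_solution Q0 z z'" and \<delta>: "\<And>x. x > 0 \<Longrightarrow> Q x - Q0 x = \<delta>"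
    and "a > 0" "x \<ge> a"
  defines "\<eta> \<equiv> \<lambda>t. cmod (y1 t) + cmod (y2 t)"
    and "C \<equiv> cmod (z a * y1' a - z' a * y1 a) + cmod (z a * y2' a - z' a * y2 a)"
  shows "cmod (z x) \<le> (C + cmod \<delta> * integral {a..x} (\<lambda>t. cmod (z t) * \<eta> t)) * \<eta> x"
proof -
  define J where "J = integral {a..x} (\<lambda>t. cmod (z t) * \<eta> t)"
  define w where "w y y' t = z t * y' t - z' t * y t" for y y' :: "real \<Rightarrow> complex" and t
  have w_le: "cmod (w y y' x) \<le> cmod (w y y' a) + cmod \<delta> * J"
    if s: "lin_ode_solution Q y y'" and y_le: "\<And>t. cmod (y t) \<le> \<eta> t" for y y'
  proof -
    have der: "(w y y' has_vector_derivative \<delta> * z t * y t) (at t)" if "t \<in> {a..x}" for t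
      using lin_ode_has_vector_derivative_cross[OF s s0, of t] \<delta>[of t] that \<open>a > 0\<close>
      by (simp add: w_def[abs_def])
    have bound: "norm (\<delta> * z t * y t) \<le> cmod \<delta> * (cmod (z t) * \<eta> t)" if "t \<in> {a..x}" for t
      using y_le[of t] unfolding norm_mult mult.assoc by (intro mult_left_mono) auto
    have "(\<lambda>t. cmod \<delta> * (cmod (z t) * \<eta> t)) integrable_on {a..x}"
      using \<open>a > 0\<close> continuous_on_lin_ode_solution[OF s0] continuous_on_lin_ode_solution[OF s1]
        continuous_on_lin_ode_solution[OF s2]
      by (intro integrable_on_Icc_if_continuous_on_pos) (auto simp: \<eta>_def intro!: continuous_intros)
    from norm_le_norm_add_integral_of_deriv[OF \<open>x \<ge> a\<close> der bound this] show ?thesis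
      by (simp add: J_def)
  qed
  have y_le: "cmod (y1 t) \<le> \<eta> t" "cmod (y2 t) \<le> \<eta> t" for t by (simp_all add: \<eta>_def)
  have "C = cmod (w y1 y1' a) + cmod (w y2 y2' a)" by (simp add: C_def w_def)
  then have w1: "cmod (w y1 y1' x) \<le> C + cmod \<delta> * J" and w2: "cmod (w y2 y2' x) \<le> C + cmod \<delta> * J"
    using w_le[OF s1 y_le(1)] w_le[OF s2 y_le(2)] norm_ge_zero[of "w y1 y1' a"]
      norm_ge_zero[of "w y2 y2' a"] by linarith+
  have "w y2 y2' x * y1 x - w y1 y1' x * y2 x = z x * (y1 x * y2' x - y1' x * y2 x)"
    by (simp add: w_def algebra_simps)
  then have "z x = w y2 y2' x * y1 x - w y1 y1' x * y2 x"
    using W[of x] \<open>x \<ge> a\<close> \<open>a > 0\<close> by simp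
  then have "cmod (z x) \<le> cmod (w y2 y2' x) * cmod (y1 x) + cmod (w y1 y1' x) * cmod (y2 x)"
    by (metis norm_mult norm_triangle_ineq4)
  also have "\<dots> \<le> (C + cmod \<delta> * J) * cmod (y1 x) + (C + cmod \<delta> * J) * cmod (y2 x)"
    by (intro add_mono mult_right_mono w1 w2 norm_ge_zero)
  finally show ?thesis by (simp add: J_def \<eta>_def algebra_simps)
qed

text \<open>By variation of constants against \<open>y1, y2\<close>, the solution \<open>z\<close> satisfies
  a Gronwall-type inequality whose coefficient \<open>\<integral> (\<bar>y1\<bar> + \<bar>y2\<bar>)\<^sup>2\<close> is small on a tail.\<close>
lemma lin_ode_sq_integrable_if_shift_limit_circle:
  fixes Q Q0 y1 y1' y2 y2' z z' :: "real \<Rightarrow> complex"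
  assumes s1: "lin_ode_solution Q y1 y1'" and s2: "lin_ode_solution Q y2 y2'"
    and W: "\<And>x. x > 0 \<Longrightarrow> y1 x * y2' x - y1' x * y2 x = 1"
    and sq: "sq_integrable_at_top y1" "sq_integrable_at_top y2"
    and s0: "lin_ode_solution Q0 z z'" and \<delta>: "\<And>x. x > 0 \<Longrightarrow> Q x - Q0 x = \<delta>"
  shows "sq_integrable_at_top z"
proof -
  note cont = continuous_on_lin_ode_solution[OF s1] continuous_on_lin_ode_solution[OF s2]
    continuous_on_lin_ode_solution[OF s0]
  define \<eta> where "\<eta> x = cmod (y1 x) + cmod (y2 x)" for x
  define \<epsilon> where "\<epsilon> = 1 / (2 * (cmod \<delta> + 1))"
  have "cmod \<delta> + 1 > 0" by (smt (verit) norm_ge_zero)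
  then have "\<epsilon> > 0" "cmod \<delta> * \<epsilon> \<le> 1 / 2" by (simp_all add: \<epsilon>_def field_simps)
  then have \<epsilon>_small: "2 * (cmod \<delta>)\<^sup>2 * \<epsilon>\<^sup>2 \<le> 1 / 2"
    using power_mono[of "cmod \<delta> * \<epsilon>" "1 / 2" 2] by (simp add: power2_eq_square mult_ac)
  obtain a where "a \<ge> 1" and \<eta>_tail: "\<And>X. X \<ge> a \<Longrightarrow> integral {a..X} (\<lambda>x. (\<eta> x)\<^sup>2) \<le> \<epsilon>"
    using sq_integrable_at_top_sum_tail_le[OF sq cont(1,3) \<open>\<epsilon> > 0\<close>] unfolding \<eta>_def by blast
  define C where "C = cmod (z a * y1' a - z' a * y1 a) + cmod (z a * y2' a - z' a * y2 a)"
  have "integral {a..X} (\<lambda>t. (cmod (z t))\<^sup>2) \<le> 4 * C\<^sup>2 * \<epsilon>" if "X \<ge> a" for X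
  proof (rule integral_sq_le_if_le_integral_mult[OF _ _ _ _ \<eta>_tail \<epsilon>_small that])
    show "continuous_on {a..} (\<lambda>t. cmod (z t))" "continuous_on {a..} \<eta>"
      using \<open>a \<ge> 1\<close> cont by (auto simp: \<eta>_def intro!: continuous_intros intro: continuous_on_subset)
    show "cmod (z x) \<le> (C + cmod \<delta> * integral {a..x} (\<lambda>t. cmod (z t) * \<eta> t)) * \<eta> x" if "x \<ge> a" for x
      using lin_ode_variation_of_constants_le[OF s1 s2 W s0 \<delta> _ that] \<open>a \<ge> 1\<close>
      by (simp add: C_def \<eta>_def[abs_def])
  qed (auto simp: \<eta>_def)
  then show ?thesis
    unfolding sq_integrable_at_top_def using \<open>a \<ge> 1\<close> by (intro exI[of _ a]) auto
qed

lemma lin_ode_solution_exp_mul_scale: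
  fixes b db B S :: "real \<Rightarrow> real"
  assumes b: "\<And>x. x > 0 \<Longrightarrow> (b has_real_derivative db x) (at x)"
    and B: "\<And>x. x > 0 \<Longrightarrow> (B has_real_derivative b x) (at x)"
    and S: "\<And>x. x > 0 \<Longrightarrow> (S has_real_derivative exp (- 2 * B x)) (at x)"
  shows "lin_ode_solution (\<lambda>x. of_real ((b x)\<^sup>2 + db x))
    (\<lambda>x. of_real (exp (B x) * S x)) (\<lambda>x. of_real (b x * exp (B x) * S x + exp (- B x)))"
  unfolding lin_ode_solution_def
proof (intro allI impI conjI)
  fix x :: real assume "x > 0"
  have exp_B: "exp (B x) * exp (- 2 * B x) = exp (- B x)" by (simp add: exp_add[symmetric])
  have "((\<lambda>x. exp (B x) * S x) has_real_derivative b x * exp (B x) * S x + exp (- B x)) (at x)"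
    using \<open>x > 0\<close> exp_B by (auto intro!: derivative_eq_intros B S simp: algebra_simps)
  then show "((\<lambda>x. of_real (exp (B x) * S x)) has_vector_derivative
      of_real (b x * exp (B x) * S x + exp (- B x))) (at x)"
    by (rule has_vector_derivative_of_real)
  have "((\<lambda>x. b x * exp (B x) * S x + exp (- B x)) has_real_derivative
      ((b x)\<^sup>2 + db x) * (exp (B x) * S x) + b x * (exp (B x) * exp (- 2 * B x) - exp (- B x))) (at x)"
    using \<open>x > 0\<close> by (auto intro!: derivative_eq_intros b B S simp: algebra_simps power2_eq_square)
  then show "((\<lambda>x. of_real (b x * exp (B x) * S x + exp (- B x))) has_vector_derivative
      of_real ((b x)\<^sup>2 + db x) * of_real (exp (B x) * S x)) (at x)"
    unfolding exp_B by (auto dest: has_vector_derivative_of_real)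
qed

text \<open>With \<open>s = exp (- 2 B)\<close>, AM-GM applied to \<open>exp B * S\<close> and \<open>exp (- B) / S\<close>, whose product is 1,
  gives \<open>(exp B * S)\<^sup>2 + s / S\<^sup>2 \<ge> 2\<close>, and \<open>s / S\<^sup>2 = (- 1 / S)'\<close> has a bounded integral.\<close>
lemma integral_sq_exp_mul_scale_ge:
  fixes B S :: "real \<Rightarrow> real"
  assumes B: "continuous_on {0<..} B"
    and S: "\<And>x. x > 0 \<Longrightarrow> (S has_real_derivative exp (- 2 * B x)) (at x)"
    and "a > 0" and S_pos: "\<And>x. x \<ge> a \<Longrightarrow> S x > 0" and "X \<ge> a"
  shows "2 * (X - a) - 1 / S a \<le> integral {a..X} (\<lambda>x. (exp (B x) * S x)\<^sup>2)"
proof -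
  let ?z = "\<lambda>x. exp (B x) * S x" and ?s = "\<lambda>x. exp (- 2 * B x)"
  have S_cont: "continuous_on {0<..} S"
    by (rule continuous_at_imp_continuous_on) (auto intro: DERIV_isCont S)
  have am_gm: "2 \<le> (?z x)\<^sup>2 + ?s x / (S x)\<^sup>2" if "x \<ge> a" for x
  proof -
    define q where "q = exp (- B x) / S x"
    have "?z x * q = 1" using S_pos[OF that] by (simp add: q_def exp_minus field_simps)
    moreover have "(exp (- B x))\<^sup>2 = ?s x"
      by (simp add: power2_eq_square exp_add[symmetric])
    then have "?s x / (S x)\<^sup>2 = q\<^sup>2" by (simp add: q_def power_divide)
    ultimately show ?thesis using sum_squares_bound[of "?z x" q] by simp
  qed
  have ftc: "((\<lambda>x. ?s x / (S x)\<^sup>2) has_integral (- (1 / S X) - - (1 / S a))) {a..X}"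
  proof (rule fundamental_theorem_of_calculus[OF \<open>X \<ge> a\<close>])
    fix x assume "x \<in> {a..X}"
    then have "x > 0" "S x \<noteq> 0" using S_pos[of x] \<open>a > 0\<close> by auto
    then have "((\<lambda>x. - (1 / S x)) has_real_derivative ?s x / (S x)\<^sup>2) (at x)"
      by (auto intro!: derivative_eq_intros S simp: power2_eq_square)
    then show "((\<lambda>x. - (1 / S x)) has_vector_derivative ?s x / (S x)\<^sup>2) (at x within {a..X})"
      by (simp add: has_real_derivative_iff_has_vector_derivative[symmetric] has_field_derivative_at_within)
  qed
  have int_z: "(\<lambda>x. (?z x)\<^sup>2) integrable_on {a..X}"
    using \<open>a > 0\<close> by (intro integrable_on_Icc_if_continuous_on_pos) (auto intro!: continuous_intros B S_cont)
  have "integral {a..X} (\<lambda>_. 2) \<le> integral {a..X} (\<lambda>x. (?z x)\<^sup>2 + ?s x / (S x)\<^sup>2)"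
    using am_gm integrable_add[OF int_z has_integral_integrable[OF ftc]] by (intro integral_le) auto
  also have "\<dots> = integral {a..X} (\<lambda>x. (?z x)\<^sup>2) + (1 / S a - 1 / S X)"
    unfolding integral_add[OF int_z has_integral_integrable[OF ftc]] integral_unique[OF ftc] by simp
  finally have "2 * (X - a) \<le> integral {a..X} (\<lambda>x. (?z x)\<^sup>2) + (1 / S a - 1 / S X)"
    using \<open>X \<ge> a\<close> by simp
  moreover have "0 < 1 / S X" using S_pos[of X] \<open>X \<ge> a\<close> by simp
  ultimately show ?thesis by linarith
qed

lemma not_sq_integrable_exp_mul_scale:
  fixes B S :: "real \<Rightarrow> real"
  assumes B: "continuous_on {0<..} B"
    and S: "\<And>x. x > 0 \<Longrightarrow> (S has_real_derivative exp (- 2 * B x)) (at x)" and "S 1 = 0"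
  shows "\<not> sq_integrable_at_top (\<lambda>x. of_real (exp (B x) * S x))"
proof
  assume sq: "sq_integrable_at_top (\<lambda>x. of_real (exp (B x) * S x))"
  have S_pos: "S x > 0" if "x > 1" for x
  proof -
    have "S 1 < S x"
    proof (rule DERIV_pos_imp_increasing[OF that])
      fix t :: real assume "1 \<le> t"
      then show "\<exists>d. (S has_real_derivative d) (at t) \<and> 0 < d" using S[of t] by force
    qed
    then show ?thesis using \<open>S 1 = 0\<close> by simp
  qed
  have "continuous_on {0<..} S"
    by (rule continuous_at_imp_continuous_on) (auto intro: DERIV_isCont S)
  then have "continuous_on {0<..} (\<lambda>x. complex_of_real (exp (B x) * S x))"
    by (auto intro!: continuous_intros B)
  then obtain N where "\<And>X. X \<ge> 2 \<Longrightarrow> integral {2..X} (\<lambda>x. (cmod (of_real (exp (B x) * S x)))\<^sup>2) \<le> N"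
    using sq_integrable_at_topD[OF sq, of 2] by auto
  then have N: "integral {2..X} (\<lambda>x. (exp (B x) * S x)\<^sup>2) \<le> N" if "X \<ge> 2" for X
    using that by (simp only: norm_of_real power2_abs)
  define X where "X = 2 + \<bar>N\<bar> + 1 / S 2 + 1"
  have "0 < 1 / S 2" using S_pos[of 2] by simp
  then have "X \<ge> 2" by (simp add: X_def)
  with integral_sq_exp_mul_scale_ge[OF B S _ S_pos] N have "2 * (X - 2) - 1 / S 2 \<le> N"
    by (smt (verit) zero_less_numeral)
  with \<open>0 < 1 / S 2\<close> show False unfolding X_def by (smt (verit))
qed

lemma lin_ode_not_limit_circle_drift_potential:
  fixes b db :: "real \<Rightarrow> real" and Q y1 y1' y2 y2' :: "real \<Rightarrow> complex"
  assumes b: "\<And>x. x > 0 \<Longrightarrow> (b has_real_derivative db x) (at x)"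
    and s1: "lin_ode_solution Q y1 y1'" and s2: "lin_ode_solution Q y2 y2'"
    and W: "\<And>x. x > 0 \<Longrightarrow> y1 x * y2' x - y1' x * y2 x = 1"
    and \<delta>: "\<And>x. x > 0 \<Longrightarrow> Q x - of_real ((b x)\<^sup>2 + db x) = \<delta>"
  shows "\<not> (sq_integrable_at_top y1 \<and> sq_integrable_at_top y2)"
proof
  assume "sq_integrable_at_top y1 \<and> sq_integrable_at_top y2"
  have b_cont: "continuous_on {0<..} b"
    by (rule continuous_at_imp_continuous_on) (auto intro: DERIV_isCont b)
  define B where "B = prim b"
  define S where "S = prim (\<lambda>x. exp (- 2 * B x))"
  have B_cont: "continuous_on {0<..} B" unfolding B_def by (rule continuous_on_prim[OF b_cont])
  have B: "(B has_real_derivative b x) (at x)" if "x > 0" for x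
    unfolding B_def has_real_derivative_iff_has_vector_derivative
    by (rule has_vector_derivative_prim[OF b_cont that])
  have S: "(S has_real_derivative exp (- 2 * B x)) (at x)" if "x > 0" for x
    unfolding S_def has_real_derivative_iff_has_vector_derivative
    by (rule has_vector_derivative_prim[OF _ that]) (auto intro!: continuous_intros B_cont)
  have "sq_integrable_at_top (\<lambda>x. of_real (exp (B x) * S x))"
    using lin_ode_sq_integrable_if_shift_limit_circle[OF s1 s2 W _ _ lin_ode_solution_exp_mul_scale[OF b B S]]
      \<open>_ \<and> _\<close> \<delta> by blast
  moreover have "\<not> sq_integrable_at_top (\<lambda>x. of_real (exp (B x) * S x))"
    by (rule not_sq_integrable_exp_mul_scale[OF B_cont S]) (simp_all add: S_def)
  ultimately show False by contradiction
qed

section \<open>The Liouville transformation\<close>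

lemma Lstar_solution_exp_mul:
  fixes b db \<kappa> B :: "real \<Rightarrow> real" and Q y y' :: "real \<Rightarrow> complex"
  assumes b: "\<And>x. x > 0 \<Longrightarrow> (b has_real_derivative db x) (at x)"
    and B: "\<And>x. x > 0 \<Longrightarrow> (B has_real_derivative b x) (at x)"
    and s: "lin_ode_solution Q y y'"
    and Q: "\<And>x. x > 0 \<Longrightarrow> Q x = of_real ((b x)\<^sup>2 + db x + 2 * \<kappa> x) + 2 * lam"
  shows "Lstar_solution b db \<kappa> lam (\<lambda>x. of_real (exp (B x)) * y x)
           (\<lambda>x. of_real (exp (B x)) * (of_real (b x) * y x + y' x))
           (\<lambda>x. of_real (exp (B x)) * (Q x * y x + 2 * of_real (b x) * y' x + of_real (db x + (b x)\<^sup>2) * y x))"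
  unfolding Lstar_solution_def
proof (intro allI impI conjI)
  fix x :: real assume "x > 0"
  note y = lin_ode_solutionD[OF s \<open>x > 0\<close>]
  have exp_B: "((\<lambda>x. complex_of_real (exp (B x))) has_vector_derivative of_real (exp (B x) * b x)) (at x)"
    by (rule has_vector_derivative_of_real[OF DERIV_fun_exp[OF B[OF \<open>x > 0\<close>]]])
  have b': "((\<lambda>x. complex_of_real (b x)) has_vector_derivative of_real (db x)) (at x)"
    by (rule has_vector_derivative_of_real[OF b[OF \<open>x > 0\<close>]])
  have "((\<lambda>x. of_real (exp (B x)) * y x) has_vector_derivative
      of_real (exp (B x)) * y' x + of_real (exp (B x) * b x) * y x) (at x)"
    by (rule has_vector_derivative_mult[OF exp_B y(1)])
  then show "((\<lambda>x. of_real (exp (B x)) * y x) has_vector_derivative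
      of_real (exp (B x)) * (of_real (b x) * y x + y' x)) (at x)"
    by (simp add: algebra_simps)
  have "((\<lambda>x. of_real (exp (B x)) * (of_real (b x) * y x + y' x)) has_vector_derivative
      of_real (exp (B x)) * ((of_real (b x) * y' x + of_real (db x) * y x) + Q x * y x)
       + of_real (exp (B x) * b x) * (of_real (b x) * y x + y' x)) (at x)"
    by (intro has_vector_derivative_mult has_vector_derivative_add exp_B b' y)
  then show "((\<lambda>x. of_real (exp (B x)) * (of_real (b x) * y x + y' x)) has_vector_derivative
      of_real (exp (B x)) * (Q x * y x + 2 * of_real (b x) * y' x + of_real (db x + (b x)\<^sup>2) * y x)) (at x)"
    by (simp add: algebra_simps power2_eq_square)
  show "of_real (exp (B x)) * (Q x * y x + 2 * of_real (b x) * y' x + of_real (db x + (b x)\<^sup>2) * y x) / 2 -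
        (complex_of_real (b x) * (of_real (exp (B x)) * (of_real (b x) * y x + y' x)) +
         complex_of_real (db x) * (of_real (exp (B x)) * y x)) -
        complex_of_real (\<kappa> x) * (of_real (exp (B x)) * y x) =
        lam * (of_real (exp (B x)) * y x)"
    using Q[OF \<open>x > 0\<close>] by (simp add: algebra_simps power2_eq_square field_simps)
qed

lemma Lstar_limit_point_at_infty_if_non_sq_integrable:
  fixes b db \<kappa> :: "real \<Rightarrow> real"
  assumes b: "\<And>x. x > 0 \<Longrightarrow> (b has_real_derivative db x) (at x)"
    and non_sq: "\<And>lam. \<exists>y y'. lin_ode_solution (\<lambda>x. of_real ((b x)\<^sup>2 + db x + 2 * \<kappa> x) + 2 * lam) y y'
      \<and> \<not> sq_integrable_at_top y"
  shows "Lstar_limit_point_at_infty b db \<kappa>"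
  unfolding Lstar_limit_point_at_infty_def
proof
  fix lam :: complex
  obtain y y' where s: "lin_ode_solution (\<lambda>x. of_real ((b x)\<^sup>2 + db x + 2 * \<kappa> x) + 2 * lam) y y'"
    and not_sq: "\<not> sq_integrable_at_top y"
    using non_sq by blast
  define B where "B = drift_prim b"
  have "continuous_on {0<..} b"
    by (rule continuous_at_imp_continuous_on) (auto intro: DERIV_isCont b)
  then have B: "(B has_real_derivative b x) (at x)" if "x > 0" for x
    unfolding B_def drift_prim_eq_prim has_real_derivative_iff_has_vector_derivative
    using that by (rule has_vector_derivative_prim)
  have weight: "scale_dens b x * (cmod (of_real (exp (B x)) * y x))\<^sup>2 = (cmod (y x))\<^sup>2" for x
    by (simp add: scale_dens_def B_def norm_mult power_mult_distrib power2_eq_square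
        flip: exp_add)
  have "\<not> sq_int_near_infty (scale_dens b) (\<lambda>x. of_real (exp (B x)) * y x)"
    using not_sq sq_integrable_at_topI[OF continuous_on_lin_ode_solution(1)[OF s]]
    unfolding sq_int_near_infty_def weight by blast
  then show "\<exists>\<phi> \<phi>1 \<phi>2. Lstar_solution b db \<kappa> lam \<phi> \<phi>1 \<phi>2 \<and> \<not> sq_int_near_infty (scale_dens b) \<phi>"
    using Lstar_solution_exp_mul[OF b B s] by blast
qed

theorem lemma2p1:
  fixes b db \<kappa> :: "real \<Rightarrow> real"
  assumes b_deriv: "\<And>x. x > 0 \<Longrightarrow> (b has_real_derivative db x) (at x)"
    and db_cont: "continuous_on {0<..} db"
    and \<kappa>_cont: "continuous_on {0<..} \<kappa>"
    and \<kappa>_nonneg: "\<And>x. x > 0 \<Longrightarrow> \<kappa> x \<ge> 0"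
    and reg0: "regular_at_0 b \<kappa>"
    and inacc: "inaccessible_at_infty b \<kappa>"
    and cond: "Liminf at_top (\<lambda>z. ereal ((b z ^ 2 + db z + 2 * \<kappa> z) / z ^ 2)) > - \<infinity>
               \<or> (\<forall>x>0. \<kappa> x = 0)"
  shows "Lstar_limit_point_at_infty b db \<kappa>"
proof (rule Lstar_limit_point_at_infty_if_non_sq_integrable[OF b_deriv])
  fix lam :: complex
  define Q where "Q x = of_real ((b x)\<^sup>2 + db x + 2 * \<kappa> x) + 2 * lam" for x
  have "continuous_on {0<..} b"
    by (rule continuous_at_imp_continuous_on) (auto intro: DERIV_isCont b_deriv)
  then have "continuous_on {0<..} Q"
    unfolding Q_def by (auto intro!: continuous_intros db_cont \<kappa>_cont)
  then obtain y1 y1' y2 y2' where s: "lin_ode_solution Q y1 y1'" "lin_ode_solution Q y2 y2'"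
    and W: "\<And>x. x > 0 \<Longrightarrow> y1 x * y2' x - y1' x * y2 x = 1"
    using lin_ode_fundamental_system by blast
  from cond have "\<not> (sq_integrable_at_top y1 \<and> sq_integrable_at_top y2)"
  proof
    assume "Liminf at_top (\<lambda>z. ereal ((b z ^ 2 + db z + 2 * \<kappa> z) / z ^ 2)) > - \<infinity>"
    then obtain A x0 where "A \<ge> 1" "x0 \<ge> 1"
      and "\<And>x. x \<ge> x0 \<Longrightarrow> (b x)\<^sup>2 + db x + 2 * \<kappa> x + 2 * Re lam \<ge> - (A * x\<^sup>2)"
      by (rule eventually_ge_neg_quadratic_if_Liminf[where c = "2 * Re lam"]) blast
    then show ?thesis
      by (intro lin_ode_not_limit_circle_if_Re_ge[OF s W, of A x0])
        (auto simp: Q_def)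
  next
    assume "\<forall>x>0. \<kappa> x = 0"
    then show ?thesis
      using lin_ode_not_limit_circle_drift_potential[OF b_deriv s W, of "2 * lam"] by (simp add: Q_def)
  qed
  then show "\<exists>y y'. lin_ode_solution Q y y' \<and> \<not> sq_integrable_at_top y"
    using s by blast
qed

end
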